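(* Let $g$ be a Riemannian metric on $\mathbb{R}^D$ written as $g_x(u,u)=u^{\top}H(x)u$, such that there exists $c_2>0$ with $g_x(u,u)\le c_2\|u\|_2^2$ for all $x,u$, and $\|H(x)-H(y)\|_{\mathcal{B}}\le L_H\|x-y\|_2$ for all $x,y$. Let $K_1,K_2>0$ and let $\mathcal{C}\subset\mathcal{C}_{K_1,K_2}$. Then for every $N\ge1$, $$\inf_{\gamma\in\mathcal{C}}\mathcal{E}^g_{\mathrm{tra},N}(\gamma)\le\inf_{\gamma\in\mathcal{C}}\mathcal{E}^g(\gamma)+C(K_1,K_2,N),\qquad C(K_1,K_2,N):=\frac{L_H(K_1^3+K_1^2K_2)}{N}+\frac{4c_2K_1K_2}{N}+\frac{4c_2K_2^2}{N^2}.$$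
   Context: $\|\cdot\|_2$ is the Euclidean norm, $\|\cdot\|_{\mathcal{B}}$ the operator norm, $\|f\|_{L^2([0,1])}^2=\int_0^1\|f\|_2^2dt$. $\mathcal{C}_{K_1,K_2}$ is the set of continuous piecewise $C^1$ curves $\gamma:[0,1]\to\mathbb{R}^D$ with $\|\dot\gamma\|_{L^2([0,1])}\le K_1$ and $\|\ddot\gamma\|_{L^2([0,1])}\le K_2$. $\mathcal{E}^g(\gamma)=\int_0^1 g_{\gamma(t)}(\dot\gamma,\dot\gamma)dt$. With $t_n=n/N$, $h=1/N$, $\beta(t_n)=(\gamma(t_{n+1})-\gamma(t_n))/h$, $\mathcal{E}^g_{\mathrm{tra},N}(\gamma)=\frac1N\sum_{n=0}^{N-1}g_{(\gamma(t_n)+\gamma(t_{n+1}))/2}(\beta(t_n),\beta(t_n))$. *)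

theory Defs
  imports "HOL-Analysis.Analysis"
begin

definition metric_g :: "(real^'n \<Rightarrow> real^'n^'n) \<Rightarrow> real^'n \<Rightarrow> real^'n \<Rightarrow> real^'n \<Rightarrow> real" where
  "metric_g H x u v = u \<bullet> (H x *v v)"

definition riemannian_matrix_field :: "(real^'n \<Rightarrow> real^'n^'n) \<Rightarrow> bool" where
  "riemannian_matrix_field H \<longleftrightarrow>
     (\<forall>x. transpose (H x) = H x \<and> (\<forall>u. u \<noteq> 0 \<longrightarrow> u \<bullet> (H x *v u) > 0))"

definition curve_class :: "real \<Rightarrow> real \<Rightarrow> (real \<Rightarrow> real^'n) set" where
  "curve_class K1 K2 = {\<gamma>. \<exists>\<gamma>' \<gamma>'' S.
      finite S \<and>
      continuous_on {0..1} \<gamma> \<and>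
      (\<forall>t\<in>{0..1}. (\<gamma> has_vector_derivative \<gamma>' t) (at t within {0..1})) \<and>
      continuous_on {0..1} \<gamma>' \<and>
      (\<forall>t\<in>{0..1} - S. (\<gamma>' has_vector_derivative \<gamma>'' t) (at t within {0..1})) \<and>
      (\<lambda>t. (norm (\<gamma>' t))\<^sup>2) integrable_on {0..1} \<and>
      (\<lambda>t. (norm (\<gamma>'' t))\<^sup>2) integrable_on {0..1} \<and>
      sqrt (integral {0..1} (\<lambda>t. (norm (\<gamma>' t))\<^sup>2)) \<le> K1 \<and>
      sqrt (integral {0..1} (\<lambda>t. (norm (\<gamma>'' t))\<^sup>2)) \<le> K2}"

definition energy :: "(real^'n \<Rightarrow> real^'n^'n) \<Rightarrow> (real \<Rightarrow> real^'n) \<Rightarrow> real" where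
  "energy H \<gamma> = integral {0..1} (\<lambda>t.
      let v = vector_derivative \<gamma> (at t within {0..1}) in metric_g H (\<gamma> t) v v)"

definition energy_tra :: "(real^'n \<Rightarrow> real^'n^'n) \<Rightarrow> nat \<Rightarrow> (real \<Rightarrow> real^'n) \<Rightarrow> real" where
  "energy_tra H N \<gamma> = (1 / real N) * (\<Sum>n<N.
      let tn = real n / real N; tn1 = real (Suc n) / real N;
          \<beta> = (1 / (1 / real N)) *\<^sub>R (\<gamma> tn1 - \<gamma> tn);
          m = (1/2) *\<^sub>R (\<gamma> tn + \<gamma> tn1)
      in metric_g H m \<beta> \<beta>)"

end

theory Submission
  imports Defs
begin

(* Freeze the metric on each cell [t_n, t_(n+1)] at the midpoint m_n of the chord. For the
   constant positive semidefinite form A = H(m_n), Jensen's inequality gives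
   h beta^T A beta <= int gamma'^T A gamma' over the cell. Replacing A by H(gamma(t)) costs at most
   L_H |m_n - gamma(t)| |gamma'(t)|^2 <= L_H (h/2) M |gamma'(t)|^2, where M = sup |gamma'| <= K1 + K2:
   the minimum of |gamma'| is at most its L^2 norm, and its oscillation at most the L^1, hence the
   L^2, norm of gamma''. Summing over the cells gives
   E_tra,N(gamma) <= E(gamma) + L_H (K1 + K2) K1^2 / (2N) for every gamma in C_{K1,K2}. This is
   below the stated constant. *)

lemma riemannian_matrix_field_nonneg:
  "riemannian_matrix_field H \<Longrightarrow> 0 \<le> u \<bullet> (H x *v u)"
  unfolding riemannian_matrix_field_def by (cases "u = 0") (auto intro: less_imp_le)

lemma symmetric_quadratic_form_diff:
  fixes A :: "real^'n^'n"
  assumes "transpose A = A"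
  shows "(u - w) \<bullet> (A *v (u - w)) = u \<bullet> (A *v u) - 2 * (w \<bullet> (A *v u)) + w \<bullet> (A *v w)"
proof -
  have "u \<bullet> (A *v w) = (transpose A *v u) \<bullet> w"
    by (simp add: dot_lmul_matrix transpose_matrix_vector)
  also have "\<dots> = w \<bullet> (A *v u)" using assms by (simp add: inner_commute)
  finally show ?thesis
    by (simp add: matrix_vector_mult_diff_distrib inner_diff_left inner_diff_right)
qed

lemma continuous_on_quadratic_form:
  fixes w :: "'a::topological_space \<Rightarrow> real^'n" and A :: "'a \<Rightarrow> real^'n^'n"
  assumes "continuous_on S w" "\<And>i j. continuous_on S (\<lambda>t. A t $ i $ j)"
  shows "continuous_on S (\<lambda>t. w t \<bullet> (A t *v w t))"
proof -
  have "(\<lambda>t. w t \<bullet> (A t *v w t)) = (\<lambda>t. \<Sum>i\<in>UNIV. w t $ i * (\<Sum>j\<in>UNIV. A t $ i $ j * w t $ j))"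
    by (simp add: inner_vec_def matrix_vector_mult_def)
  then show ?thesis
    by (simp only:) (intro continuous_on_sum continuous_on_mult continuous_on_component assms)
qed

lemma quadratic_form_mean_le_integral:
  fixes v :: "real \<Rightarrow> real^'n" and A :: "real^'n^'n"
  assumes sym: "transpose A = A" and psd: "\<And>u. 0 \<le> u \<bullet> (A *v u)"
    and ab: "a \<le> b" and v: "continuous_on {a..b} v"
    and mean: "(v has_integral ((b - a) *\<^sub>R \<beta>)) {a..b}"
  shows "(b - a) * (\<beta> \<bullet> (A *v \<beta>)) \<le> integral {a..b} (\<lambda>t. v t \<bullet> (A *v v t))"
proof -
  have lin: "bounded_linear (\<lambda>w. 2 * (\<beta> \<bullet> (A *v w)))"
    by (intro bounded_linear_const_mult bounded_linear_compose[OF bounded_linear_inner_right]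
        matrix_vector_mul_bounded_linear)
  have "((\<lambda>t. 2 * (\<beta> \<bullet> (A *v v t)) - \<beta> \<bullet> (A *v \<beta>)) has_integral
      2 * (\<beta> \<bullet> (A *v ((b - a) *\<^sub>R \<beta>))) - (b - a) * (\<beta> \<bullet> (A *v \<beta>))) {a..b}"
    using has_integral_diff[OF has_integral_linear[OF mean lin] has_integral_const_real]
    using ab by (simp add: o_def)
  moreover have "((\<lambda>t. v t \<bullet> (A *v v t)) has_integral integral {a..b} (\<lambda>t. v t \<bullet> (A *v v t))) {a..b}"
    by (intro integrable_integral integrable_continuous_interval continuous_on_quadratic_form v) simp
  moreover have "2 * (\<beta> \<bullet> (A *v v t)) - \<beta> \<bullet> (A *v \<beta>) \<le> v t \<bullet> (A *v v t)" for t
    using symmetric_quadratic_form_diff[OF sym, of "v t" \<beta>] psd[of "v t - \<beta>"] by linarith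
  ultimately have "2 * (\<beta> \<bullet> (A *v ((b - a) *\<^sub>R \<beta>))) - (b - a) * (\<beta> \<bullet> (A *v \<beta>))
      \<le> integral {a..b} (\<lambda>t. v t \<bullet> (A *v v t))"
    by (rule has_integral_le)
  then show ?thesis by (simp add: matrix_vector_mult_scaleR)
qed

lemma lipschitz_matrix_field_const_nonneg:
  fixes H :: "real^'n \<Rightarrow> real^'n^'n"
  assumes "\<forall>x y. onorm (\<lambda>v. (H x - H y) *v v) \<le> L * norm (x - y)"
  shows "0 \<le> L"
proof -
  have "0 \<le> onorm (\<lambda>v. (H 1 - H 0) *v v)"
    by (rule onorm_pos_le[OF matrix_vector_mul_bounded_linear])
  also have "\<dots> \<le> L * norm (1 :: real^'n)" using assms by (metis diff_zero)
  finally show ?thesis by (simp add: zero_le_mult_iff vec_eq_iff)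
qed

lemma continuous_on_matrix_entry_of_lipschitz:
  fixes H :: "real^'n \<Rightarrow> real^'n^'n"
  assumes lip: "\<forall>x y. onorm (\<lambda>v. (H x - H y) *v v) \<le> L * norm (x - y)"
  shows "continuous_on S (\<lambda>x. H x $ i $ j)"
proof -
  have "L-lipschitz_on UNIV (\<lambda>x. H x $ i $ j)"
  proof (rule lipschitz_onI[OF _ lipschitz_matrix_field_const_nonneg[OF lip]])
    fix x y :: "real^'n"
    have "dist (H x $ i $ j) (H y $ i $ j) = \<bar>((H x - H y) *v axis j 1) $ i\<bar>"
      by (simp add: matrix_vector_mult_basis column_def dist_real_def)
    also have "\<dots> \<le> norm ((H x - H y) *v axis j 1)" by (rule component_le_norm_cart)
    also have "\<dots> \<le> onorm (\<lambda>v. (H x - H y) *v v) * norm (axis j (1::real))"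
      by (rule onorm[OF matrix_vector_mul_bounded_linear])
    also have "\<dots> \<le> L * dist x y" using lip by (simp add: dist_norm)
    finally show "dist (H x $ i $ j) (H y $ i $ j) \<le> L * dist x y" .
  qed
  then show ?thesis by (rule continuous_on_subset[OF lipschitz_on_continuous_on]) simp
qed

lemma quadratic_form_le_of_lipschitz:
  fixes H :: "real^'n \<Rightarrow> real^'n^'n"
  assumes lip: "\<forall>x y. onorm (\<lambda>v. (H x - H y) *v v) \<le> L * norm (x - y)"
  shows "u \<bullet> (H x *v u) \<le> u \<bullet> (H y *v u) + L * norm (x - y) * (norm u)\<^sup>2"
proof -
  have "u \<bullet> (H x *v u) - u \<bullet> (H y *v u) = u \<bullet> ((H x - H y) *v u)"
    by (simp add: matrix_vector_mult_diff_rdistrib inner_diff_right)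
  also have "\<dots> \<le> norm u * norm ((H x - H y) *v u)"
    by (rule order_trans[OF abs_ge_self Cauchy_Schwarz_ineq2])
  also have "\<dots> \<le> norm u * (onorm (\<lambda>v. (H x - H y) *v v) * norm u)"
    by (intro mult_left_mono onorm[OF matrix_vector_mul_bounded_linear]) simp
  also have "\<dots> \<le> norm u * (L * norm (x - y) * norm u)"
    using lip by (intro mult_left_mono mult_right_mono) auto
  finally show ?thesis by (simp add: power2_eq_square algebra_simps)
qed

lemma continuous_on_metric_g:
  fixes H :: "real^'n \<Rightarrow> real^'n^'n" and \<gamma> v :: "real \<Rightarrow> real^'n"
  assumes lip: "\<forall>x y. onorm (\<lambda>v. (H x - H y) *v v) \<le> L * norm (x - y)"
    and "continuous_on S \<gamma>" "continuous_on S v"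
  shows "continuous_on S (\<lambda>t. metric_g H (\<gamma> t) (v t) (v t))"
  unfolding metric_g_def
  by (intro continuous_on_quadratic_form assms continuous_on_compose2[OF
        continuous_on_matrix_entry_of_lipschitz[OF lip, of UNIV]]) auto

lemma integral_norm_le_of_integral_norm_sq_le:
  fixes f :: "real \<Rightarrow> 'a::euclidean_space"
  assumes f: "f integrable_on {0..1}"
    and f2: "(\<lambda>t. (norm (f t))\<^sup>2) integrable_on {0..1}"
    and bound: "integral {0..1} (\<lambda>t. (norm (f t))\<^sup>2) \<le> K\<^sup>2" and K: "0 < K"
  shows "(\<lambda>t. norm (f t)) integrable_on {0..1}" and "integral {0..1} (\<lambda>t. norm (f t)) \<le> K"
proof -
  define g where "g t = ((norm (f t))\<^sup>2 / K + K) / 2" for t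
  have amgm: "x * 2 \<le> x\<^sup>2 / K + K" for x :: real
  proof -
    have "2 * x * K \<le> x\<^sup>2 + K\<^sup>2"
      using sum_squares_bound[of x K] by (simp add: mult.commute)
    then show ?thesis using K by (simp add: field_simps power2_eq_square)
  qed
  have g: "g integrable_on {0..1}"
    unfolding g_def by (intro integrable_on_divide integrable_add integrable_const_ivl f2)
  show norm_f: "(\<lambda>t. norm (f t)) integrable_on {0..1}"
    by (rule measurable_bounded_by_integrable_imp_integrable
          [OF measurable_compose[OF integrable_imp_measurable[OF f] borel_measurable_norm] g])
       (auto simp: g_def amgm)
  have "integral {0..1} (\<lambda>t. norm (f t)) \<le> integral {0..1} g"
    by (rule integral_le[OF norm_f g]) (simp add: g_def amgm)
  also have "\<dots> = (integral {0..1} (\<lambda>t. (norm (f t))\<^sup>2) / K + K) / 2"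
    unfolding g_def by (simp add: integral_divide integral_add[OF integrable_on_divide[OF f2] integrable_const_ivl])
  also have "\<dots> \<le> (K\<^sup>2 / K + K) / 2"
    using bound K by (intro divide_right_mono add_right_mono) auto
  also have "\<dots> = K" using K by (simp add: power2_eq_square)
  finally show "integral {0..1} (\<lambda>t. norm (f t)) \<le> K" .
qed

lemma has_integral_vector_derivative_off_finite:
  fixes v v' :: "real \<Rightarrow> 'a::banach"
  assumes S: "finite S" and v: "continuous_on {a..b} v"
    and v': "\<forall>t\<in>{a..b} - S. (v has_vector_derivative v' t) (at t within {a..b})"
    and cd: "a \<le> c" "c \<le> d" "d \<le> b"
  shows "(v' has_integral v d - v c) {c..d}"
proof (rule fundamental_theorem_of_calculus_strong[where S = "S \<union> {c, d}"])
  show "continuous_on {c..d} v" using v by (rule continuous_on_subset) (use cd in auto)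
  fix x assume "x \<in> {c..d} - (S \<union> {c, d})"
  then have "x \<in> {a..b} - S" and "at x within {a..b} = at x"
    using cd by (auto intro!: at_within_interior)
  then show "(v has_vector_derivative v' x) (at x)" using v' by metis
qed (use S cd in auto)

lemma norm_diff_le_integral_norm_derivative:
  fixes v v' :: "real \<Rightarrow> 'a::euclidean_space"
  assumes S: "finite S" and v: "continuous_on {0..1} v"
    and v': "\<forall>t\<in>{0..1} - S. (v has_vector_derivative v' t) (at t within {0..1})"
    and norm_v': "(\<lambda>t. norm (v' t)) integrable_on {0..1}"
    and cd: "0 \<le> c" "c \<le> d" "d \<le> 1"
  shows "norm (v d - v c) \<le> integral {0..1} (\<lambda>t. norm (v' t))"
proof -
  note ftc = has_integral_vector_derivative_off_finite[OF S v v' cd]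
  have "norm (v d - v c) \<le> integral {c..d} (\<lambda>t. norm (v' t))"
    using integral_norm_bound_integral[OF has_integral_integrable[OF ftc]
        integrable_on_subinterval[OF norm_v']] ftc cd by (auto simp: integral_unique)
  also have "\<dots> \<le> integral {0..1} (\<lambda>t. norm (v' t))"
    using cd by (intro integral_subset_le norm_v' integrable_on_subinterval[OF norm_v']) auto
  finally show ?thesis .
qed

lemma norm_le_of_L2_bounds:
  fixes v v' :: "real \<Rightarrow> 'a::euclidean_space"
  assumes S: "finite S" and v: "continuous_on {0..1} v"
    and v': "\<forall>t\<in>{0..1} - S. (v has_vector_derivative v' t) (at t within {0..1})"
    and v2: "(\<lambda>t. (norm (v t))\<^sup>2) integrable_on {0..1}"
    and v'2: "(\<lambda>t. (norm (v' t))\<^sup>2) integrable_on {0..1}"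
    and K1: "integral {0..1} (\<lambda>t. (norm (v t))\<^sup>2) \<le> K1\<^sup>2" "0 \<le> K1"
    and K2: "integral {0..1} (\<lambda>t. (norm (v' t))\<^sup>2) \<le> K2\<^sup>2" "0 < K2"
    and t: "t \<in> {0..1}"
  shows "norm (v t) \<le> K1 + K2"
proof -
  obtain s where s: "s \<in> {0..1}" and s_min: "\<forall>y\<in>{0..1}. norm (v s) \<le> norm (v y)"
    using continuous_attains_inf[OF compact_Icc _ continuous_on_norm[OF v]] by auto
  have "integral {0..1::real} (\<lambda>_. (norm (v s))\<^sup>2) \<le> integral {0..1} (\<lambda>t. (norm (v t))\<^sup>2)"
    using s_min by (intro integral_le v2) (auto intro: power_mono)
  then have "(norm (v s))\<^sup>2 \<le> integral {0..1} (\<lambda>t. (norm (v t))\<^sup>2)"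
    by simp
  with K1(1) have "(norm (v s))\<^sup>2 \<le> K1\<^sup>2" by linarith
  then have vs: "norm (v s) \<le> K1"
    using K1(2) by (rule power2_le_imp_le)
  have "v' integrable_on {0..1}"
    using has_integral_vector_derivative_off_finite[OF S v v', of 0 1] by auto
  note norm_v' = integral_norm_le_of_integral_norm_sq_le[OF this v'2 K2]
  have "norm (v t - v s) \<le> K2"
  proof (cases "s \<le> t")
    case True
    then show ?thesis
      using norm_diff_le_integral_norm_derivative[OF S v v' norm_v'(1), of s t] norm_v'(2) s t by auto
  next
    case False
    then show ?thesis
      using norm_diff_le_integral_norm_derivative[OF S v v' norm_v'(1), of t s] norm_v'(2) s t
      by (auto simp: norm_minus_commute)
  qed
  then show ?thesis using vs norm_triangle_ineq2[of "v t" "v s"] by linarith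
qed

lemma curve_class_velocityE:
  fixes \<gamma> :: "real \<Rightarrow> real^'n"
  assumes "\<gamma> \<in> curve_class K1 K2" and K1: "0 < K1" and K2: "0 < K2"
  obtains v where "continuous_on {0..1} \<gamma>"
    and "\<forall>t\<in>{0..1}. (\<gamma> has_vector_derivative v t) (at t within {0..1})"
    and "continuous_on {0..1} v"
    and "\<forall>t\<in>{0..1}. norm (v t) \<le> K1 + K2"
    and "(\<lambda>t. (norm (v t))\<^sup>2) integrable_on {0..1}"
    and "integral {0..1} (\<lambda>t. (norm (v t))\<^sup>2) \<le> K1\<^sup>2"
proof -
  obtain v v' S where S: "finite S" and \<gamma>: "continuous_on {0..1} \<gamma>"
    and \<gamma>': "\<forall>t\<in>{0..1}. (\<gamma> has_vector_derivative v t) (at t within {0..1})"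
    and v: "continuous_on {0..1} v"
    and v': "\<forall>t\<in>{0..1} - S. (v has_vector_derivative v' t) (at t within {0..1})"
    and v2: "(\<lambda>t. (norm (v t))\<^sup>2) integrable_on {0..1}"
    and v'2: "(\<lambda>t. (norm (v' t))\<^sup>2) integrable_on {0..1}"
    and L2_v: "sqrt (integral {0..1} (\<lambda>t. (norm (v t))\<^sup>2)) \<le> K1"
    and L2_v': "sqrt (integral {0..1} (\<lambda>t. (norm (v' t))\<^sup>2)) \<le> K2"
    using assms(1) unfolding curve_class_def by blast
  note bound_v = sqrt_le_D[OF L2_v] and bound_v' = sqrt_le_D[OF L2_v']
  from norm_le_of_L2_bounds[OF S v v' v2 v'2 bound_v _ bound_v' K2] K1
  have "\<forall>t\<in>{0..1}. norm (v t) \<le> K1 + K2" by auto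
  with that \<gamma> \<gamma>' v v2 bound_v show thesis by blast
qed

lemma norm_diff_le_of_vector_derivative_bound:
  fixes f f' :: "real \<Rightarrow> 'a::banach"
  assumes f': "\<forall>t\<in>{a..b}. (f has_vector_derivative f' t) (at t within {a..b})"
    and bound: "\<forall>t\<in>{a..b}. norm (f' t) \<le> M"
    and xy: "a \<le> x" "x \<le> y" "y \<le> b"
  shows "norm (f y - f x) \<le> M * (y - x)"
proof -
  have M: "0 \<le> M" using bound xy by (meson atLeastAtMost_iff norm_ge_zero order_trans)
  have "(f' has_integral f y - f x) {x..y}"
    by (rule fundamental_theorem_of_calculus[OF xy(2)])
       (use xy in \<open>auto intro!: has_vector_derivative_within_subset[OF f'[rule_format]]\<close>)
  from has_integral_bound_real[OF M finite.emptyI this] bound xy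
  show ?thesis by auto
qed

lemma midpoint_metric_le_integral:
  fixes H :: "real^'n \<Rightarrow> real^'n^'n" and \<gamma> v :: "real \<Rightarrow> real^'n"
  assumes riem: "riemannian_matrix_field H"
    and lip: "\<forall>x y. onorm (\<lambda>v. (H x - H y) *v v) \<le> L * norm (x - y)"
    and \<gamma>: "continuous_on {0..1} \<gamma>"
    and \<gamma>': "\<forall>t\<in>{0..1}. (\<gamma> has_vector_derivative v t) (at t within {0..1})"
    and v: "continuous_on {0..1} v"
    and v_bound: "\<forall>t\<in>{0..1}. norm (v t) \<le> M"
    and ab: "0 \<le> a" "a < b" "b \<le> 1"
  shows "(b - a) * metric_g H ((1/2) *\<^sub>R (\<gamma> a + \<gamma> b))
            ((1 / (b - a)) *\<^sub>R (\<gamma> b - \<gamma> a)) ((1 / (b - a)) *\<^sub>R (\<gamma> b - \<gamma> a))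
         \<le> integral {a..b} (\<lambda>t. metric_g H (\<gamma> t) (v t) (v t))
            + L * ((b - a) / 2 * M) * integral {a..b} (\<lambda>t. (norm (v t))\<^sup>2)"
proof -
  define m where "m = (1/2) *\<^sub>R (\<gamma> a + \<gamma> b)"
  define \<beta> where "\<beta> = (1 / (b - a)) *\<^sub>R (\<gamma> b - \<gamma> a)"
  have sub: "{a..b} \<subseteq> {0..1}" using ab by auto
  have v_ab: "continuous_on {a..b} v" using v sub by (rule continuous_on_subset)
  have "(v has_integral ((b - a) *\<^sub>R \<beta>)) {a..b}"
    using ab sub by (auto simp: \<beta>_def intro!: fundamental_theorem_of_calculus
        has_vector_derivative_within_subset[OF \<gamma>'[rule_format]])
  then have jensen: "(b - a) * metric_g H m \<beta> \<beta> \<le> integral {a..b} (\<lambda>t. metric_g H m (v t) (v t))"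
    unfolding metric_g_def using riem ab v_ab
    by (intro quadratic_form_mean_le_integral riemannian_matrix_field_nonneg)
       (auto simp: riemannian_matrix_field_def)
  have near: "norm (m - \<gamma> t) \<le> (b - a) / 2 * M" if t: "t \<in> {a..b}" for t
  proof -
    have "m - \<gamma> t = (1/2) *\<^sub>R ((\<gamma> b - \<gamma> t) - (\<gamma> t - \<gamma> a))"
      by (simp add: m_def vec_eq_iff algebra_simps)
    then have "norm (m - \<gamma> t) \<le> (1/2) * (norm (\<gamma> b - \<gamma> t) + norm (\<gamma> t - \<gamma> a))"
      using norm_triangle_ineq4[of "\<gamma> b - \<gamma> t" "\<gamma> t - \<gamma> a"] by simp
    also have "\<dots> \<le> (1/2) * (M * (b - t) + M * (t - a))"
      using norm_diff_le_of_vector_derivative_bound[OF \<gamma>' v_bound, of t b]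
        norm_diff_le_of_vector_derivative_bound[OF \<gamma>' v_bound, of a t] ab t by auto
    finally show ?thesis by (simp add: algebra_simps)
  qed
  have L: "0 \<le> L" by (rule lipschitz_matrix_field_const_nonneg[OF lip])
  have pointwise: "metric_g H m (v t) (v t)
      \<le> metric_g H (\<gamma> t) (v t) (v t) + L * ((b - a) / 2 * M) * (norm (v t))\<^sup>2"
    if t: "t \<in> {a..b}" for t
  proof -
    have "L * norm (m - \<gamma> t) * (norm (v t))\<^sup>2 \<le> L * ((b - a) / 2 * M) * (norm (v t))\<^sup>2"
      using near[OF t] L by (intro mult_right_mono mult_left_mono) auto
    then show ?thesis
      using quadratic_form_le_of_lipschitz[OF lip, of "v t" m "\<gamma> t"] unfolding metric_g_def by linarith
  qed
  have "integral {a..b} (\<lambda>t. metric_g H m (v t) (v t))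
      \<le> integral {a..b} (\<lambda>t. metric_g H (\<gamma> t) (v t) (v t) + L * ((b - a) / 2 * M) * (norm (v t))\<^sup>2)"
    using continuous_on_subset[OF \<gamma> sub] continuous_on_metric_g[OF lip _ v_ab]
    by (intro integral_le integrable_continuous_interval continuous_intros v_ab pointwise) auto
  also have "\<dots> = integral {a..b} (\<lambda>t. metric_g H (\<gamma> t) (v t) (v t))
      + L * ((b - a) / 2 * M) * integral {a..b} (\<lambda>t. (norm (v t))\<^sup>2)"
    using continuous_on_subset[OF \<gamma> sub]
    by (subst integral_add)
       (auto intro!: integrable_continuous_interval continuous_on_metric_g[OF lip] v_ab continuous_intros)
  finally show ?thesis using jensen unfolding m_def \<beta>_def by linarith
qed

lemma integral_uniform_partition:
  fixes f :: "real \<Rightarrow> 'a::banach"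
  assumes f: "f integrable_on {0..1}" and N: "0 < N"
  shows "integral {0..1} f = (\<Sum>n<N. integral {real n / real N..real (Suc n) / real N} f)"
proof -
  have "integral {0..real k / real N} f = (\<Sum>n<k. integral {real n / real N..real (Suc n) / real N} f)"
    if "k \<le> N" for k
    using that
  proof (induction k)
    case (Suc k)
    have "real k / real N \<le> real (Suc k) / real N" "real (Suc k) / real N \<le> 1"
      using Suc.prems by (auto simp: divide_right_mono)
    then have "integral {0..real k / real N} f + integral {real k / real N..real (Suc k) / real N} f
          = integral {0..real (Suc k) / real N} f"
      by (intro Henstock_Kurzweil_Integration.integral_combine)
         (auto intro: integrable_on_subinterval[OF f])
    then show ?case using Suc by simp
  qed simp
  from this[of N] show ?thesis using N by simp
qed

lemma energy_tra_le_energy_add: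
  fixes H :: "real^'n \<Rightarrow> real^'n^'n" and \<gamma> :: "real \<Rightarrow> real^'n"
  assumes riem: "riemannian_matrix_field H"
    and lip: "\<forall>x y. onorm (\<lambda>v. (H x - H y) *v v) \<le> L * norm (x - y)"
    and \<gamma>_class: "\<gamma> \<in> curve_class K1 K2" and K1: "0 < K1" and K2: "0 < K2" and N: "0 < N"
  shows "energy_tra H N \<gamma> \<le> energy H \<gamma> + L * (K1 + K2) * K1\<^sup>2 / (2 * real N)"
proof -
  obtain v where \<gamma>: "continuous_on {0..1} \<gamma>"
    and \<gamma>': "\<forall>t\<in>{0..1}. (\<gamma> has_vector_derivative v t) (at t within {0..1})"
    and v: "continuous_on {0..1} v" and v_bound: "\<forall>t\<in>{0..1}. norm (v t) \<le> K1 + K2"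
    and v2: "(\<lambda>t. (norm (v t))\<^sup>2) integrable_on {0..1}"
    and L2_v: "integral {0..1} (\<lambda>t. (norm (v t))\<^sup>2) \<le> K1\<^sup>2"
    using curve_class_velocityE[OF \<gamma>_class K1 K2] by blast
  define F where "F t = metric_g H (\<gamma> t) (v t) (v t)" for t
  define G where "G t = (norm (v t))\<^sup>2" for t
  define c where "c = L * (1 / real N / 2 * (K1 + K2))"
  let ?t = "\<lambda>n. real n / real N"
  have F: "F integrable_on {0..1}"
    unfolding F_def by (intro integrable_continuous_interval continuous_on_metric_g[OF lip \<gamma> v])
  have G: "G integrable_on {0..1}" using v2 by (simp add: G_def[abs_def])
  have energy_eq: "energy H \<gamma> = integral {0..1} F"
    unfolding energy_def F_def Let_def
  proof (rule integral_cong)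
    fix t :: real assume "t \<in> {0..1}"
    then have "vector_derivative \<gamma> (at t within {0..1}) = v t"
      using \<gamma>' by (intro vector_derivative_within_closed_interval) auto
    then show "metric_g H (\<gamma> t) (vector_derivative \<gamma> (at t within {0..1}))
        (vector_derivative \<gamma> (at t within {0..1})) = metric_g H (\<gamma> t) (v t) (v t)"
      by simp
  qed
  have cell: "(1 / real N) * (let tn = ?t n; tn1 = ?t (Suc n);
          \<beta> = (1 / (1 / real N)) *\<^sub>R (\<gamma> tn1 - \<gamma> tn); m = (1/2) *\<^sub>R (\<gamma> tn + \<gamma> tn1)
        in metric_g H m \<beta> \<beta>)
      \<le> integral {?t n..?t (Suc n)} F + c * integral {?t n..?t (Suc n)} G"
    if n: "n < N" for n
  proof -
    have diff: "?t (Suc n) - ?t n = 1 / real N" using N by (simp add: field_simps)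
    have "0 \<le> ?t n" "?t n < ?t (Suc n)" "?t (Suc n) \<le> 1"
      using n N by (auto simp: divide_strict_right_mono)
    from midpoint_metric_le_integral[OF riem lip \<gamma> \<gamma>' v v_bound this]
    show ?thesis unfolding diff Let_def F_def G_def c_def by simp
  qed
  have "energy_tra H N \<gamma> \<le> (\<Sum>n<N. integral {?t n..?t (Suc n)} F + c * integral {?t n..?t (Suc n)} G)"
    unfolding energy_tra_def sum_distrib_left by (intro sum_mono cell) simp
  also have "\<dots> = integral {0..1} F + c * integral {0..1} G"
    using integral_uniform_partition[OF F N] integral_uniform_partition[OF G N]
    by (simp add: sum.distrib sum_distrib_left)
  also have "\<dots> \<le> integral {0..1} F + c * K1\<^sup>2"
    using L2_v lipschitz_matrix_field_const_nonneg[OF lip] K1 K2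
    unfolding G_def c_def by (intro add_left_mono mult_left_mono) auto
  finally show ?thesis unfolding energy_eq c_def by (simp add: field_simps)
qed

lemma energy_tra_nonneg:
  "riemannian_matrix_field H \<Longrightarrow> 0 \<le> energy_tra H N \<gamma>"
  unfolding energy_tra_def Let_def metric_g_def
  by (intro mult_nonneg_nonneg sum_nonneg riemannian_matrix_field_nonneg) auto

lemma INF_le_INF_add_const:
  fixes f g :: "'a \<Rightarrow> real"
  assumes le: "\<And>x. x \<in> A \<Longrightarrow> f x \<le> g x + c" and bdd: "bdd_below (f ` A)" and c: "0 \<le> c"
  shows "(INF x\<in>A. f x) \<le> (INF x\<in>A. g x) + c"
proof (cases "A = {}")
  case False
  have "(INF x\<in>A. f x) - c \<le> (INF x\<in>A. g x)"
  proof (rule cINF_greatest[OF False])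
    fix x assume "x \<in> A"
    then show "(INF x\<in>A. f x) - c \<le> g x" using cINF_lower[OF bdd] le by fastforce
  qed
  then show ?thesis by linarith
qed (use c in simp)

theorem proposition7p6:
  fixes H :: "real^'n \<Rightarrow> real^'n^'n"
    and c2 L_H K1 K2 :: real
    and C :: "(real \<Rightarrow> real^'n) set"
    and N :: nat
  assumes riem: "riemannian_matrix_field H"
    and c2_pos: "c2 > 0"
    and upper: "\<forall>x u. metric_g H x u u \<le> c2 * (norm u)\<^sup>2"
    and lip: "\<forall>x y. onorm (\<lambda>v. (H x - H y) *v v) \<le> L_H * norm (x - y)"
    and K1_pos: "K1 > 0" and K2_pos: "K2 > 0"
    and C_sub: "C \<subseteq> curve_class K1 K2"
    and N_ge: "N \<ge> 1"
  shows "(INF \<gamma>\<in>C. energy_tra H N \<gamma>) \<le> (INF \<gamma>\<in>C. energy H \<gamma>)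
           + (L_H * (K1^3 + K1\<^sup>2 * K2) / real N + 4 * c2 * K1 * K2 / real N
              + 4 * c2 * K2\<^sup>2 / (real N)\<^sup>2)"
proof (rule INF_le_INF_add_const)
  have L_H: "0 \<le> L_H" by (rule lipschitz_matrix_field_const_nonneg[OF lip])
  have "L_H * (K1 + K2) * K1\<^sup>2 / (2 * real N) \<le> L_H * (K1^3 + K1\<^sup>2 * K2) / real N"
    using L_H K1_pos K2_pos N_ge
    by (simp add: divide_simps power2_eq_square power3_eq_cube algebra_simps)
  moreover have "0 \<le> 4 * c2 * K1 * K2 / real N + 4 * c2 * K2\<^sup>2 / (real N)\<^sup>2"
    using c2_pos K1_pos K2_pos by simp
  ultimately show "energy_tra H N \<gamma> \<le> energy H \<gamma> + (L_H * (K1^3 + K1\<^sup>2 * K2) / real N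
      + 4 * c2 * K1 * K2 / real N + 4 * c2 * K2\<^sup>2 / (real N)\<^sup>2)" if "\<gamma> \<in> C" for \<gamma>
    using energy_tra_le_energy_add[OF riem lip _ K1_pos K2_pos, of \<gamma> N] that C_sub N_ge by fastforce
  show "bdd_below ((\<lambda>\<gamma>. energy_tra H N \<gamma>) ` C)"
    using energy_tra_nonneg[OF riem] by (intro bdd_belowI[of _ 0]) auto
  show "0 \<le> L_H * (K1^3 + K1\<^sup>2 * K2) / real N + 4 * c2 * K1 * K2 / real N + 4 * c2 * K2\<^sup>2 / (real N)\<^sup>2"
    using L_H c2_pos K1_pos K2_pos by simp
qed

end
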